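(* Let Assumption 1 hold and let $\{\mathbf x_k\}$, $\{\rho_k\}$, $\{\Delta_k\}$ be generated by Algorithm MADS-PIP, with path-following index set $\mathcal K_\rho$. Then $\lim_{k\in\mathcal K_\rho}\Delta_k=0$.
   Context: Consider the problem of minimizing $f(\mathbf x)$ over $\mathbf x\in\mathbb R^n$ subject to $g_\ell(\mathbf x)\le 0$ ($\ell=1,\dots,m$) and $h_j(\mathbf x)=0$ ($j=1,\dots,p$), where $f,g_\ell,h_j:\mathbb R^n\to\mathbb R\cup\{+\infty\}$. The index set $\{1,\dots,m\}$ is partitioned into disjoint sets $\mathcal G^{int}$ and $\mathcal G^{ext}$, fixed throughout. Define $\Omega^{int}=\{\mathbf x: g_\ell(\mathbf x)\le 0\ \forall\ell\in\mathcal G^{int}\}$, $\Omega^{ext}=\{\mathbf x: g_\ell(\mathbf x)\le0\ \forall \ell\in\mathcal G^{ext},\ h_j(\mathbf x)=0\ \forall j\}$, $\Omega=\Omega^{int}\cap\Omega^{ext}$. Let $\phi^{prox}(\mathbf x)=\max_{\ell\in\mathcal G^{int}}g_\ell(\mathbf x)$; let $c^{int}(\mathbf x)=-\prod_{\ell\in\mathcal G^{int}}\min\{1,-g_\ell(\mathbf x)\}$ if $g_\ell(\mathbf x)\le0$ for all $\ell\in\mathcal G^{int}$, and $c^{int}(\mathbf x)=\phi^{prox}(\mathbf x)$ otherwise; let $c^{ext}(\mathbf x)=\sum_{\ell\in\mathcal G^{ext}}(\max\{0,g_\ell(\mathbf x)\})^2+\sum_{j=1}^p h_j(\mathbf x)^2$.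 (If $\mathcal G^{int}=\emptyset$, then $c^{int}\equiv-1$ and $[\phi^{prox}]^2$ is read as $+\infty$.) For $\rho>0$ the merit function is $z(\mathbf x;\rho)=f(\mathbf x)-\rho\log(-c^{int}(\mathbf x))+\frac1\rho c^{ext}(\mathbf x)$ if $c^{int}(\mathbf x)<0$, and $z(\mathbf x;\rho)=+\infty$ otherwise. Algorithm MADS-PIP: inputs $\mathbf x_0$ with $g_\ell(\mathbf x_0)<0$ for all $\ell\in\mathcal G^{int}$ and $z(\mathbf x_0;\rho_0)<+\infty$, $\rho_0>0$, $\theta_\rho\in(0,1)$, $\Delta_0>0$, $\theta_\Delta\in(0,1)\cap\mathbb Q$, $\beta>1$. For $k=0,1,2,\dots$ (the algorithm never stops): mesh $\mathcal M_k=\{\mathbf x_k+\delta_k\mathbf u:\mathbf u\in\mathbb Z^n\}$ with $\delta_k=\min\{\Delta_k,\Delta_k^2/\Delta_0\}$; frame $\mathcal F_k=\{\mathbf x\in\mathcal M_k:\|\mathbf x-\mathbf x_k\|\le\Delta_k\}$. Search: a finite (possibly empty) set $\mathcal S_k\subset\mathcal M_k$ is examined; if some $\mathbf s\in\mathcal S_k$ satisfies $z(\mathbf s;\rho_k)<z(\mathbf x_k;\rho_k)$, set $\mathbf x_{k+1}=\mathbf s$, $\Delta_{k+1}=\Delta_k/\theta_\Delta$, $\rho_{k+1}=\rho_k$ (successful iteration). Otherwise poll: choose a finite set $\mathcal D_k$ of nonzero directions with $\mathbf x_k+\mathbf d\in\mathcal F_k$ for all $\mathbf d\in\mathcal D_k$;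 if some $\mathbf d\in\mathcal D_k$ satisfies $z(\mathbf x_k+\mathbf d;\rho_k)<z(\mathbf x_k;\rho_k)$, set $\mathbf x_{k+1}=\mathbf x_k+\mathbf d$, $\Delta_{k+1}=\Delta_k/\theta_\Delta$, $\rho_{k+1}=\rho_k$ (successful). Otherwise the iteration is unsuccessful: $\mathbf x_{k+1}=\mathbf x_k$, $\Delta_{k+1}=\theta_\Delta\Delta_k$, and $\rho_{k+1}=\theta_\rho\rho_k$ if $\Delta_{k+1}\le\min\{\rho_k^\beta,[\phi^{prox}(\mathbf x_k)]^2\}$, else $\rho_{k+1}=\rho_k$. The path-following index set is $\mathcal K_\rho=\{k:\rho_{k+1}<\rho_k\}$ and $\{\mathbf x_k\}_{k\in\mathcal K_\rho}$ is the path-following subsequence. A point $\bar{\mathbf x}$ is an end-path point if there is an infinite $\mathcal K_\rho^{x}\subseteq\mathcal K_\rho$ with $\lim_{k\in\mathcal K_\rho^x}\mathbf x_k=\bar{\mathbf x}$; $\{\mathbf x_k\}_{k\in\mathcal K^x_\rho}$ is then an end-path subsequence. Assumption 1: for every $\alpha\in\mathbb R$ the level set $\{\mathbf x\in\mathbb R^n: f(\mathbf x)\le\alpha\}$ is bounded. *)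

theory Defs
  imports "HOL-Analysis.Analysis" "HOL-Library.Extended_Real"
begin

text \<open>Functions R^n -> R \<union> {+\<infinity>} are modelled as maps into ereal (never -\<infinity>,
  which is an explicit hypothesis of the theorem).\<close>

definition phi_prox :: "nat set \<Rightarrow> (nat \<Rightarrow> 'a \<Rightarrow> ereal) \<Rightarrow> 'a \<Rightarrow> ereal" where
  "phi_prox Gi g x = Max ((\<lambda>l. g l x) ` Gi)"

definition phi_prox_sq :: "nat set \<Rightarrow> (nat \<Rightarrow> 'a \<Rightarrow> ereal) \<Rightarrow> 'a \<Rightarrow> ereal" where
  "phi_prox_sq Gi g x = (if Gi = {} then \<infinity> else (phi_prox Gi g x)\<^sup>2)"

definition c_int :: "nat set \<Rightarrow> (nat \<Rightarrow> 'a \<Rightarrow> ereal) \<Rightarrow> 'a \<Rightarrow> ereal" where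
  "c_int Gi g x = (if \<forall>l\<in>Gi. g l x \<le> 0 then - (\<Prod>l\<in>Gi. min 1 (- g l x))
                   else phi_prox Gi g x)"

definition c_ext :: "nat set \<Rightarrow> nat \<Rightarrow> (nat \<Rightarrow> 'a \<Rightarrow> ereal) \<Rightarrow> (nat \<Rightarrow> 'a \<Rightarrow> ereal) \<Rightarrow> 'a \<Rightarrow> ereal" where
  "c_ext Ge p g h x = (\<Sum>l\<in>Ge. (max 0 (g l x))\<^sup>2) + (\<Sum>j\<in>{1..p}. (h j x)\<^sup>2)"

text \<open>Merit function z(x;rho). When c_int x < 0, c_int x is a finite value in [-1,0).\<close>
definition merit :: "('a \<Rightarrow> ereal) \<Rightarrow> nat set \<Rightarrow> nat set \<Rightarrow> nat \<Rightarrow> (nat \<Rightarrow> 'a \<Rightarrow> ereal)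
    \<Rightarrow> (nat \<Rightarrow> 'a \<Rightarrow> ereal) \<Rightarrow> 'a \<Rightarrow> real \<Rightarrow> ereal" where
  "merit f Gi Ge p g h x \<rho> =
     (if c_int Gi g x < 0
      then f x - ereal (\<rho> * ln (- real_of_ereal (c_int Gi g x))) + ereal (1 / \<rho>) * c_ext Ge p g h x
      else \<infinity>)"

definition mesh :: "real^'n \<Rightarrow> real \<Rightarrow> (real^'n) set" where
  "mesh xc \<delta> = {xc + \<delta> *\<^sub>R u | u. \<forall>i. u $ i \<in> \<int>}"

definition frame :: "real^'n \<Rightarrow> real \<Rightarrow> real \<Rightarrow> (real^'n) set" where
  "frame xc \<delta> \<Delta> = {y \<in> mesh xc \<delta>. norm (y - xc) \<le> \<Delta>}"

text \<open>One iteration k of MADS-PIP, with z the merit function (as a function of x and rho),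
  phisq = [phi_prox]^2, and search set / poll directions chosen by the algorithm.\<close>
definition mads_pip_step ::
  "(real^'n \<Rightarrow> real \<Rightarrow> ereal) \<Rightarrow> (real^'n \<Rightarrow> ereal) \<Rightarrow> real \<Rightarrow> real \<Rightarrow> real \<Rightarrow> real
   \<Rightarrow> (nat \<Rightarrow> real^'n) \<Rightarrow> (nat \<Rightarrow> real) \<Rightarrow> (nat \<Rightarrow> real) \<Rightarrow> nat \<Rightarrow> bool" where
  "mads_pip_step z phisq \<Delta>0 \<theta>\<rho> \<theta>\<Delta> \<beta> x \<rho> \<Delta> k \<longleftrightarrow>
    (let \<delta> = min (\<Delta> k) ((\<Delta> k)\<^sup>2 / \<Delta>0);
         M = mesh (x k) \<delta>;
         F = frame (x k) \<delta> (\<Delta> k);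
         zk = z (x k) (\<rho> k)
     in \<exists>S D. finite S \<and> S \<subseteq> M \<and> finite D \<and> 0 \<notin> D \<and> (\<forall>d\<in>D. x k + d \<in> F) \<and>
        ((\<exists>s\<in>S. z s (\<rho> k) < zk \<and> x (Suc k) = s \<and> \<Delta> (Suc k) = \<Delta> k / \<theta>\<Delta> \<and> \<rho> (Suc k) = \<rho> k)
         \<or> ((\<forall>s\<in>S. \<not> z s (\<rho> k) < zk) \<and>
            (\<exists>d\<in>D. z (x k + d) (\<rho> k) < zk \<and> x (Suc k) = x k + d \<and>
                   \<Delta> (Suc k) = \<Delta> k / \<theta>\<Delta> \<and> \<rho> (Suc k) = \<rho> k))
         \<or> ((\<forall>s\<in>S. \<not> z s (\<rho> k) < zk) \<and> (\<forall>d\<in>D. \<not> z (x k + d) (\<rho> k) < zk) \<and>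
            x (Suc k) = x k \<and> \<Delta> (Suc k) = \<theta>\<Delta> * \<Delta> k \<and>
            \<rho> (Suc k) = (if ereal (\<Delta> (Suc k)) \<le> min (ereal ((\<rho> k) powr \<beta>)) (phisq (x k))
                         then \<theta>\<rho> * \<rho> k else \<rho> k))))"

end

theory Submission
  imports Defs
begin

(* The penalty parameters rho_k are positive and nonincreasing, hence converge to some L.
   At every path-following iteration rho_(k+1) = theta_rho * rho_k, so if there are infinitely
   many of them L = theta_rho * L, i.e. L = 0 (if there are finitely many, the filter is trivial).
   Such an iteration is also unsuccessful with theta_Delta * Delta_k = Delta_(k+1) <= rho_k^beta,
   which forces Delta_k -> 0 along the path-following subsequence. *)

lemma mads_pip_step_rho_cases:
  assumes "mads_pip_step z phisq \<Delta>0 \<theta>\<rho> \<theta>\<Delta> \<beta> x \<rho> \<Delta> k"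
  shows "\<rho> (Suc k) = \<rho> k \<or> \<rho> (Suc k) = \<theta>\<rho> * \<rho> k"
  using assms unfolding mads_pip_step_def Let_def by (auto split: if_splits)

lemma mads_pip_step_Delta_cases:
  assumes "mads_pip_step z phisq \<Delta>0 \<theta>\<rho> \<theta>\<Delta> \<beta> x \<rho> \<Delta> k"
  shows "\<Delta> (Suc k) = \<Delta> k / \<theta>\<Delta> \<or> \<Delta> (Suc k) = \<theta>\<Delta> * \<Delta> k"
  using assms unfolding mads_pip_step_def Let_def by auto

lemma mads_pip_step_rho_decrease:
  assumes "mads_pip_step z phisq \<Delta>0 \<theta>\<rho> \<theta>\<Delta> \<beta> x \<rho> \<Delta> k" and "\<rho> (Suc k) < \<rho> k"
  shows "\<rho> (Suc k) = \<theta>\<rho> * \<rho> k" and "\<Delta> (Suc k) = \<theta>\<Delta> * \<Delta> k" and "\<Delta> (Suc k) \<le> \<rho> k powr \<beta>"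
  using assms unfolding mads_pip_step_def Let_def by (auto split: if_splits)

lemma mads_pip_rho_pos:
  assumes "\<forall>k. mads_pip_step z phisq \<Delta>0 \<theta>\<rho> \<theta>\<Delta> \<beta> x \<rho> \<Delta> k" "\<rho> 0 > 0" "\<theta>\<rho> > 0"
  shows "\<rho> k > 0"
proof (induction k)
  case (Suc k)
  then show ?case using mads_pip_step_rho_cases[of z phisq \<Delta>0 \<theta>\<rho> \<theta>\<Delta> \<beta> x \<rho> \<Delta> k] assms by auto
qed (use assms in simp)

lemma mads_pip_Delta_pos:
  assumes "\<forall>k. mads_pip_step z phisq \<Delta>0 \<theta>\<rho> \<theta>\<Delta> \<beta> x \<rho> \<Delta> k" "\<Delta> 0 > 0" "\<theta>\<Delta> > 0"
  shows "\<Delta> k > 0"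
proof (induction k)
  case (Suc k)
  then show ?case using mads_pip_step_Delta_cases[of z phisq \<Delta>0 \<theta>\<rho> \<theta>\<Delta> \<beta> x \<rho> \<Delta> k] assms by auto
qed (use assms in simp)

lemma mads_pip_rho_decseq:
  assumes "\<forall>k. mads_pip_step z phisq \<Delta>0 \<theta>\<rho> \<theta>\<Delta> \<beta> x \<rho> \<Delta> k" "\<rho> 0 > 0" "0 < \<theta>\<rho>" "\<theta>\<rho> \<le> 1"
  shows "decseq \<rho>"
proof (rule decseq_SucI)
  fix k
  have "\<rho> k > 0" using mads_pip_rho_pos assms by blast
  then show "\<rho> (Suc k) \<le> \<rho> k"
    using mads_pip_step_rho_cases[of z phisq \<Delta>0 \<theta>\<rho> \<theta>\<Delta> \<beta> x \<rho> \<Delta> k] assms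
    by (auto simp: mult_le_cancel_right1)
qed

lemma decseq_tendsto_zero_on_contractions:
  fixes r :: "nat \<Rightarrow> real"
  assumes "decseq r" "\<And>k. 0 \<le> r k" "\<theta> \<noteq> 1" "\<And>k. k \<in> K \<Longrightarrow> r (Suc k) = \<theta> * r k"
  shows "(r \<longlongrightarrow> 0) (inf sequentially (principal K))"
proof (cases "inf sequentially (principal K) = bot")
  case False
  obtain L where L: "r \<longlonglongrightarrow> L"
    using assms(1,2) decseq_convergent by metis
  have "((\<lambda>k. r (Suc k)) \<longlongrightarrow> L) (inf sequentially (principal K))"
    using LIMSEQ_Suc[OF L] by (rule tendsto_mono[OF inf_le1])
  moreover have "eventually (\<lambda>k. r (Suc k) = \<theta> * r k) (inf sequentially (principal K))"
    by (simp add: eventually_inf_principal assms(4))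
  ultimately have "((\<lambda>k. \<theta> * r k) \<longlongrightarrow> L) (inf sequentially (principal K))"
    by (rule Lim_transform_eventually)
  moreover have r_lim: "(r \<longlongrightarrow> L) (inf sequentially (principal K))"
    using L by (rule tendsto_mono[OF inf_le1])
  ultimately have "L = \<theta> * L"
    using tendsto_unique[OF False] tendsto_mult_left[OF r_lim] by blast
  with assms(3) have "L = 0" by auto
  with r_lim show ?thesis by simp
qed simp

lemma mads_pip_step_Delta_le_on_path:
  assumes "mads_pip_step z phisq \<Delta>0 \<theta>\<rho> \<theta>\<Delta> \<beta> x \<rho> \<Delta> k" "\<rho> (Suc k) < \<rho> k" "\<theta>\<Delta> > 0"
  shows "\<Delta> k \<le> \<rho> k powr \<beta> / \<theta>\<Delta>"
  using mads_pip_step_rho_decrease(2,3)[OF assms(1,2)] assms(3) by (simp add: field_simps)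

lemma mads_pip_rho_tendsto_zero_on_path:
  assumes iter: "\<forall>k. mads_pip_step z phisq \<Delta>0 \<theta>\<rho> \<theta>\<Delta> \<beta> x \<rho> \<Delta> k"
    and "\<rho> 0 > 0" "0 < \<theta>\<rho>" "\<theta>\<rho> < 1"
  shows "(\<rho> \<longlongrightarrow> 0) (inf sequentially (principal {k. \<rho> (Suc k) < \<rho> k}))"
proof (rule decseq_tendsto_zero_on_contractions[where \<theta> = \<theta>\<rho>])
  show "decseq \<rho>" using mads_pip_rho_decseq[OF iter] assms(2-4) by simp
  show "0 \<le> \<rho> k" for k using mads_pip_rho_pos[OF iter] assms(2,3) less_imp_le by blast
  show "\<rho> (Suc k) = \<theta>\<rho> * \<rho> k" if "k \<in> {k. \<rho> (Suc k) < \<rho> k}" for k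
    using mads_pip_step_rho_decrease(1)[OF iter[rule_format]] that by simp
qed (use assms(4) in simp)

theorem mainTheorem2:
  fixes f :: "real^'n \<Rightarrow> ereal"
    and g h :: "nat \<Rightarrow> real^'n \<Rightarrow> ereal"
    and m p :: nat
    and Gint Gext :: "nat set"
    and x :: "nat \<Rightarrow> real^'n" and \<rho> \<Delta> :: "nat \<Rightarrow> real"
    and \<rho>0 \<theta>\<rho> \<Delta>0 \<theta>\<Delta> \<beta> :: real
  assumes partition: "Gint \<union> Gext = {1..m}" "Gint \<inter> Gext = {}"
    and f_fin: "\<forall>y. f y \<noteq> -\<infinity>"
    and g_fin: "\<forall>l y. g l y \<noteq> -\<infinity>"
    and h_fin: "\<forall>j y. h j y \<noteq> -\<infinity>"
    and assumption1: "\<forall>\<alpha>::real. bounded {y. f y \<le> ereal \<alpha>}"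
    and x0_int: "\<forall>l\<in>Gint. g l (x 0) < 0"
    and x0_fin: "merit f Gint Gext p g h (x 0) \<rho>0 < \<infinity>"
    and rho0: "\<rho>0 > 0" "\<rho> 0 = \<rho>0"
    and theta_rho: "0 < \<theta>\<rho>" "\<theta>\<rho> < 1"
    and Delta0: "\<Delta>0 > 0" "\<Delta> 0 = \<Delta>0"
    and theta_Delta: "0 < \<theta>\<Delta>" "\<theta>\<Delta> < 1" "\<theta>\<Delta> \<in> \<rat>"
    and beta: "\<beta> > 1"
    and iter: "\<forall>k. mads_pip_step (merit f Gint Gext p g h) (phi_prox_sq Gint g)
                    \<Delta>0 \<theta>\<rho> \<theta>\<Delta> \<beta> x \<rho> \<Delta> k"
  shows "(\<Delta> \<longlongrightarrow> 0) (inf sequentially (principal {k. \<rho> (Suc k) < \<rho> k}))"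
proof -
  let ?F = "inf sequentially (principal {k. \<rho> (Suc k) < \<rho> k})"
  have rho_pos: "\<rho> k > 0" for k
    using mads_pip_rho_pos[OF iter] rho0 theta_rho by simp
  have Delta_nonneg: "eventually (\<lambda>k. 0 \<le> \<Delta> k) ?F"
    using mads_pip_Delta_pos[OF iter] Delta0 theta_Delta
    by (intro always_eventually) (simp add: less_imp_le)
  have Delta_bound: "eventually (\<lambda>k. \<Delta> k \<le> \<rho> k powr \<beta> / \<theta>\<Delta>) ?F"
    unfolding eventually_inf_principal
    using mads_pip_step_Delta_le_on_path[OF iter[rule_format] _ theta_Delta(1)]
    by (intro always_eventually) simp
  have "(\<rho> \<longlongrightarrow> 0) ?F"
    using mads_pip_rho_tendsto_zero_on_path[OF iter] rho0 theta_rho by simp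
  then have bound_lim: "((\<lambda>k. \<rho> k powr \<beta> / \<theta>\<Delta>) \<longlongrightarrow> 0) ?F"
    using rho_pos beta
    by (intro tendsto_divide_zero tendsto_zero_powrI[OF _ tendsto_const])
       (simp_all add: less_imp_le)
  show ?thesis
    by (rule tendsto_sandwich[OF Delta_nonneg Delta_bound tendsto_const bound_lim])
qed

end
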